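(* Let $S$ be a numerical semigroup with minimal generators $a_1<a_2<\cdots<a_\nu$ ($\nu\ge 2$), multiplicity $\mu=a_1$ and conductor $c$, and suppose $a_2>\frac{c+\mu}{3}$. Let $\pi:\mathbb{Z}\to\mathbb{Z}/\mu\mathbb{Z}$ be the quotient map, $P=\{a_1,\dots,a_\nu\}$, $P_1=\{a\in P\setminus\{\mu\}: \tfrac13(c+\mu)<a<\tfrac12(c+\mu)\}$, $P_2=\{a\in P\setminus\{\mu\}: \tfrac12(c+\mu)\le a<\tfrac23(c+\mu)\}$, and $A=\pi(P)$, $A_1=\pi(P_1)$, $A_2=\pi(P_2)$. Then $$\mathbb{Z}/\mu\mathbb{Z}=A\cup(A_1+A_1)\cup(A_1+A_2).$$
   Context: A numerical semigroup is a submonoid $S\subseteq\mathbb{N}$ (containing $0$, closed under addition) with finite complement. Its minimal generating set is the unique minimal set of generators; its cardinality $\nu$ is the embedding dimension, and the smallest minimal generator $\mu$ is the multiplicity. The conductor $c$ is the least integer with $c+\mathbb{N}\subseteq S$ (i.e. Frobenius number plus one). For subsets $X,Y$ of $\mathbb{Z}/\mu\mathbb{Z}$, $X+Y=\{x+y: x\in X,y\in Y\}$. *)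

theory Defs
  imports Main
begin

definition numerical_semigroup :: "nat set \<Rightarrow> bool" where
  "numerical_semigroup S \<longleftrightarrow> 0 \<in> S \<and> (\<forall>x\<in>S. \<forall>y\<in>S. x + y \<in> S) \<and> finite (UNIV - S)"

definition min_gens :: "nat set \<Rightarrow> nat set" where
  "min_gens S = {a \<in> S. a \<noteq> 0 \<and> \<not> (\<exists>x\<in>S. \<exists>y\<in>S. x \<noteq> 0 \<and> y \<noteq> 0 \<and> a = x + y)}"

definition multiplicity_ns :: "nat set \<Rightarrow> nat" where
  "multiplicity_ns S = Min (min_gens S)"

definition conductor :: "nat set \<Rightarrow> nat" where
  "conductor S = (LEAST c. \<forall>n\<ge>c. n \<in> S)"

end

theory Submission
  imports Defs
begin

text \<open>For each nonzero residue r take the least element w of S congruent to r. It lies in the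
  Apery set of the multiplicity \<mu>, so w < c + \<mu>, and every nonzero element of that Apery set
  is at least the second generator a2 > (c + \<mu>)/3. If w is not a generator it splits as
  x + y with x, y in the Apery set; both are then below 2 a2 and hence generators, the smaller
  one lies in P1 and the larger one in P1 or P2.\<close>

text \<open>The Apery set {x \<in> S. x - m \<notin> S}, phrased without truncated subtraction.\<close>

definition apery_set :: "nat set \<Rightarrow> nat \<Rightarrow> nat set" where
  "apery_set S m = {x \<in> S. \<forall>z\<in>S. x \<noteq> m + z}"

lemma exists_min_gens_le:
  fixes S T :: "nat set"
  assumes sub: "T \<subseteq> S"
    and summand: "\<And>u v. u \<in> S \<Longrightarrow> v \<in> S \<Longrightarrow> u + v \<in> T \<Longrightarrow> u \<in> T"
    and "x \<in> T" "x \<noteq> 0"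
  shows "\<exists>g \<in> min_gens S \<inter> T. g \<le> x"
  using assms(3,4)
proof (induction x rule: less_induct)
  case (less x)
  show ?case
  proof (cases "x \<in> min_gens S")
    case False
    then obtain u v where uv: "u \<in> S" "v \<in> S" "u \<noteq> 0" "v \<noteq> 0" "x = u + v"
      using less.prems sub unfolding min_gens_def by blast
    moreover have "u \<in> T" using summand less.prems(1) uv by blast
    ultimately obtain g where "g \<in> min_gens S \<inter> T" "g \<le> u"
      using less.IH[of u] by auto
    then show ?thesis using uv by (intro bexI[of _ g]) auto
  qed (use less.prems in auto)
qed

lemma apery_set_summand:
  assumes add: "\<And>x y. x \<in> S \<Longrightarrow> y \<in> S \<Longrightarrow> x + y \<in> S"
    and "u \<in> S" "v \<in> S" "u + v \<in> apery_set S m"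
  shows "u \<in> apery_set S m"
proof -
  have "u \<noteq> m + z" if "z \<in> S" for z
  proof
    assume "u = m + z"
    then have "u + v = m + (z + v)" by simp
    moreover have "z + v \<in> S" using add that \<open>v \<in> S\<close> by blast
    ultimately show False using \<open>u + v \<in> apery_set S m\<close> unfolding apery_set_def by blast
  qed
  then show ?thesis using \<open>u \<in> S\<close> unfolding apery_set_def by blast
qed

lemma exists_min_gens_apery_le:
  assumes add: "\<And>x y. x \<in> S \<Longrightarrow> y \<in> S \<Longrightarrow> x + y \<in> S" and "0 \<in> S"
    and "x \<in> apery_set S m" "x \<noteq> 0"
  shows "\<exists>g \<in> min_gens S - {m}. g \<le> x"
proof -
  have "apery_set S m \<subseteq> S" unfolding apery_set_def by blast
  then obtain g where "g \<in> min_gens S" "g \<in> apery_set S m" "g \<le> x"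
    using exists_min_gens_le[of "apery_set S m" S x] apery_set_summand[OF add] assms(3,4)
    by blast
  moreover have "g \<noteq> m" using \<open>g \<in> apery_set S m\<close> \<open>0 \<in> S\<close> unfolding apery_set_def by force
  ultimately show ?thesis by blast
qed

lemma apery_set_mem_min_gens:
  assumes add: "\<And>x y. x \<in> S \<Longrightarrow> y \<in> S \<Longrightarrow> x + y \<in> S"
    and bound: "\<And>y. y \<in> apery_set S m \<Longrightarrow> y \<noteq> 0 \<Longrightarrow> b \<le> y"
    and x: "x \<in> apery_set S m" "x \<noteq> 0" "x < 2 * b"
  shows "x \<in> min_gens S"
proof (rule ccontr)
  assume "x \<notin> min_gens S"
  then obtain u v where uv: "u \<in> S" "v \<in> S" "u \<noteq> 0" "v \<noteq> 0" "x = u + v"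
    using x unfolding min_gens_def apery_set_def by blast
  have "u \<in> apery_set S m" "v \<in> apery_set S m"
    using apery_set_summand[OF add] uv x(1) by (metis add.commute)+
  then have "b \<le> u" "b \<le> v" using bound uv by auto
  then show False using uv x(3) by linarith
qed

lemma apery_set_sum_of_min_gens:
  assumes add: "\<And>x y. x \<in> S \<Longrightarrow> y \<in> S \<Longrightarrow> x + y \<in> S" and "0 \<in> S"
    and bound: "\<And>y. y \<in> apery_set S m \<Longrightarrow> y \<noteq> 0 \<Longrightarrow> b \<le> y"
    and w: "w \<in> apery_set S m" "w \<noteq> 0" "w \<notin> min_gens S" "w < 3 * b"
  obtains x y where "x \<in> min_gens S - {m}" "y \<in> min_gens S - {m}" "b \<le> x" "b \<le> y"
    "w = x + y"
proof -
  obtain x y where xy: "x \<in> S" "y \<in> S" "x \<noteq> 0" "y \<noteq> 0" "w = x + y"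
    using w unfolding min_gens_def apery_set_def by blast
  have ap: "x \<in> apery_set S m" "y \<in> apery_set S m"
    using apery_set_summand[OF add] xy w(1) by (metis add.commute)+
  then have b: "b \<le> x" "b \<le> y" using bound xy by auto
  have "x \<in> min_gens S" "y \<in> min_gens S"
    using apery_set_mem_min_gens[OF add bound] ap xy b w(4) by auto
  moreover have "x \<noteq> m" "y \<noteq> m" using ap \<open>0 \<in> S\<close> unfolding apery_set_def by force+
  ultimately show thesis using that b xy by blast
qed

lemma conductor_le_imp_mem:
  assumes "numerical_semigroup S" "conductor S \<le> n"
  shows "n \<in> S"
proof -
  have "finite (UNIV - S)" using assms(1) unfolding numerical_semigroup_def by blast
  then obtain k where k: "\<forall>m\<in>UNIV - S. m < k" using finite_nat_set_iff_bounded by blast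
  have "\<forall>m\<ge>k. m \<in> S"
  proof (intro allI impI)
    fix m assume "k \<le> m"
    then show "m \<in> S" using k by (meson DiffI UNIV_I leD)
  qed
  then have "\<forall>m\<ge>conductor S. m \<in> S" unfolding conductor_def by (rule LeastI)
  then show ?thesis using assms(2) by blast
qed

lemma exists_apery_set_mod_eq:
  assumes ns: "numerical_semigroup S" and "r < m"
  obtains w where "w \<in> apery_set S m" "w mod m = r" "w < conductor S + m"
proof -
  define w where "w = (LEAST n. n \<in> S \<and> n mod m = r)"
  have "conductor S * m + r \<in> S \<and> (conductor S * m + r) mod m = r"
    using conductor_le_imp_mem[OF ns] \<open>r < m\<close> by (simp add: trans_le_add1)
  then have w: "w \<in> S" "w mod m = r" unfolding w_def by (metis (mono_tags, lifting) LeastI)+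
  have least: "w \<le> n" if "n \<in> S" "n mod m = r" for n
    unfolding w_def using that by (simp add: Least_le)
  have ap: "w \<in> apery_set S m"
    unfolding apery_set_def using w least \<open>r < m\<close> by fastforce
  moreover have "w < conductor S + m"
  proof (rule ccontr)
    assume "\<not> w < conductor S + m"
    then have "w - m \<in> S" "w = m + (w - m)" using conductor_le_imp_mem[OF ns] by auto
    then show False using ap unfolding apery_set_def by blast
  qed
  ultimately show thesis using that w by blast
qed

lemma sum_mod_mem_image_sums:
  fixes x y m :: nat
  assumes "x \<in> X" "y \<in> Y"
  shows "(x + y) mod m \<in> {(u + v) mod m | u v. u \<in> (\<lambda>a. a mod m) ` X \<and> v \<in> (\<lambda>a. a mod m) ` Y}"
proof -
  have "(x + y) mod m = (x mod m + y mod m) mod m" by (simp add: mod_add_eq)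
  then show ?thesis using assms by blast
qed

lemma sum_mod_mem_sumsets:
  fixes P :: "nat set" and \<mu> c b x y :: nat
  defines "P1 \<equiv> {a \<in> P - {\<mu>}. c + \<mu> < 3 * a \<and> 2 * a < c + \<mu>}"
    and "P2 \<equiv> {a \<in> P - {\<mu>}. c + \<mu> \<le> 2 * a \<and> 3 * a < 2 * (c + \<mu>)}"
  assumes "x \<in> P - {\<mu>}" "y \<in> P - {\<mu>}" "b \<le> x" "b \<le> y"
    and "x + y < c + \<mu>" "c + \<mu> < 3 * b"
  shows "(x + y) mod \<mu> \<in>
           {(u + v) mod \<mu> | u v. u \<in> (\<lambda>a. a mod \<mu>) ` P1 \<and> v \<in> (\<lambda>a. a mod \<mu>) ` P1}
         \<union> {(u + v) mod \<mu> | u v. u \<in> (\<lambda>a. a mod \<mu>) ` P1 \<and> v \<in> (\<lambda>a. a mod \<mu>) ` P2}"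
  using assms(3-8)
proof (induction x y rule: linorder_wlog)
  case (le x y)
  have ineq: "c + \<mu> < 3 * x" "2 * x < c + \<mu>" "c + \<mu> < 3 * y" "3 * y < 2 * (c + \<mu>)"
    using le(1,4-7) unfolding distrib_left by linarith+
  have "x \<in> P1" using le(2) ineq(1,2) unfolding P1_def by simp
  moreover have "y \<in> P1 \<or> y \<in> P2"
    using le(3) ineq(3,4) unfolding P1_def P2_def by (cases "2 * y < c + \<mu>") simp_all
  ultimately show ?case using sum_mod_mem_image_sums[of x P1 y] sum_mod_mem_image_sums[of x P1 y P2]
    by blast
next
  case (sym x y)
  then show ?case by (simp only: add.commute)
qed

lemma residue_mem_min_gens_or_sumsets:
  fixes S :: "nat set" and \<mu> b r :: nat
  defines "c \<equiv> conductor S"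
  defines "P1 \<equiv> {a \<in> min_gens S - {\<mu>}. c + \<mu> < 3 * a \<and> 2 * a < c + \<mu>}"
    and "P2 \<equiv> {a \<in> min_gens S - {\<mu>}. c + \<mu> \<le> 2 * a \<and> 3 * a < 2 * (c + \<mu>)}"
  assumes ns: "numerical_semigroup S" and \<mu>: "\<mu> \<in> min_gens S"
    and bound: "\<And>y. y \<in> apery_set S \<mu> \<Longrightarrow> y \<noteq> 0 \<Longrightarrow> b \<le> y"
    and b: "c + \<mu> < 3 * b" and r: "r < \<mu>"
  shows "r \<in> (\<lambda>a. a mod \<mu>) ` min_gens S
      \<union> {(u + v) mod \<mu> | u v. u \<in> (\<lambda>a. a mod \<mu>) ` P1 \<and> v \<in> (\<lambda>a. a mod \<mu>) ` P1}
      \<union> {(u + v) mod \<mu> | u v. u \<in> (\<lambda>a. a mod \<mu>) ` P1 \<and> v \<in> (\<lambda>a. a mod \<mu>) ` P2}"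
proof -
  have S: "0 \<in> S" "\<And>x y. x \<in> S \<Longrightarrow> y \<in> S \<Longrightarrow> x + y \<in> S"
    using ns unfolding numerical_semigroup_def by auto
  obtain w where w: "w \<in> apery_set S \<mu>" "w mod \<mu> = r" "w < c + \<mu>"
    using exists_apery_set_mod_eq[OF ns r] unfolding c_def by blast
  consider "w = 0" | "w \<in> min_gens S" | "w \<noteq> 0" "w \<notin> min_gens S" by blast
  then show ?thesis
  proof cases
    case 1
    then have "r = \<mu> mod \<mu>" using w(2) by simp
    then show ?thesis using \<mu> by (intro UnI1 image_eqI)
  next
    case 2
    then show ?thesis using w(2) by (intro UnI1 image_eqI) simp_all
  next
    case 3
    have "w < 3 * b" using w(3) b by linarith
    then obtain x y where xy: "x \<in> min_gens S - {\<mu>}" "y \<in> min_gens S - {\<mu>}"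
      "b \<le> x" "b \<le> y" "w = x + y"
      using apery_set_sum_of_min_gens[OF S(2,1) bound w(1) 3] by blast
    have r_eq: "r = (x + y) mod \<mu>" using w(2) xy(5) by simp
    have "x + y < c + \<mu>" using w(3) xy(5) by simp
    then show ?thesis unfolding Un_assoc r_eq P1_def P2_def
      by (intro UnI2 sum_mod_mem_sumsets[OF xy(1-4) _ b])
  qed
qed

theorem proposition2p1:
  fixes S :: "nat set"
  assumes "numerical_semigroup S"
    and "card (min_gens S) \<ge> 2"
    and "3 * Min (min_gens S - {multiplicity_ns S}) > conductor S + multiplicity_ns S"
  shows "let \<mu> = multiplicity_ns S; c = conductor S; P = min_gens S;
             P1 = {a \<in> P - {\<mu>}. c + \<mu> < 3 * a \<and> 2 * a < c + \<mu>};
             P2 = {a \<in> P - {\<mu>}. c + \<mu> \<le> 2 * a \<and> 3 * a < 2 * (c + \<mu>)};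
             A = (\<lambda>a. a mod \<mu>) ` P; A1 = (\<lambda>a. a mod \<mu>) ` P1; A2 = (\<lambda>a. a mod \<mu>) ` P2
         in {0..<\<mu>} = A \<union> {(x + y) mod \<mu> | x y. x \<in> A1 \<and> y \<in> A1}
                        \<union> {(x + y) mod \<mu> | x y. x \<in> A1 \<and> y \<in> A2}"
proof -
  define \<mu> where "\<mu> = multiplicity_ns S"
  define a2 where "a2 = Min (min_gens S - {\<mu>})"
  have fin: "finite (min_gens S)" using assms(2) card.infinite by fastforce
  have "min_gens S \<noteq> {}" using assms(2) by auto
  then have \<mu>_mem: "\<mu> \<in> min_gens S" using fin unfolding \<mu>_def multiplicity_ns_def by simp
  then have "0 < \<mu>" unfolding min_gens_def by simp
  have S: "0 \<in> S" "\<And>x y. x \<in> S \<Longrightarrow> y \<in> S \<Longrightarrow> x + y \<in> S"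
    using assms(1) unfolding numerical_semigroup_def by auto
  have a2: "a2 \<le> y" if "y \<in> apery_set S \<mu>" "y \<noteq> 0" for y
    using exists_min_gens_apery_le[OF S(2,1) that] fin unfolding a2_def
    by (meson Min_le finite_Diff order_trans)
  have "conductor S + \<mu> < 3 * a2" using assms(3) unfolding a2_def \<mu>_def by simp
  note cover = residue_mem_min_gens_or_sumsets[OF assms(1) \<mu>_mem a2 this]
  show ?thesis unfolding Let_def \<mu>_def[symmetric]
    using \<open>0 < \<mu>\<close> by (intro equalityI subsetI cover) auto
qed

end
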